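(* Let $m\ge2$, let $\eta$ be a primitive $m$-th root of unity, and let $F(x,y)=(x+y)^m$. Suppose $G(x,y)$ is a real polynomial such that $G(\eta x,\eta y)=G(x,y)$, $G=1$ on the line $x+y=1$, $G$ has only non-negative coefficients, $G(0,0)=0$, and $G$ has degree $Km$ for a positive integer $K$. Then there are real homogeneous polynomials $H_{jm}$ of degree $jm$ (or zero), $1\le j\le K-1$, such that $$G=(F-H_m)+(FH_m-H_{2m})+\dots+(FH_{(K-2)m}-H_{(K-1)m})+FH_{(K-1)m}$$ (for $K=1$ this reads $G=F$). If the $H_{jm}$ have non-negative coefficients, then $N(G)\ge Km+1$.
   Context: $N(q)$ denotes the number of distinct monomials with nonzero coefficient in the polynomial $q$. *)

theory Defs
  imports Complex_Main "HOL-Computational_Algebra.Polynomial"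
begin

text \<open>Real bivariate polynomials in x, y are represented as "real poly poly":
  a polynomial in x whose coefficients are polynomials in y.
  The coefficient of the monomial x^i y^j of p is bcoeff p i j.\<close>

type_synonym bipoly = "real poly poly"

definition bcoeff :: "bipoly \<Rightarrow> nat \<Rightarrow> nat \<Rightarrow> real" where
  "bcoeff p i j = coeff (coeff p i) j"

definition bsupp :: "bipoly \<Rightarrow> (nat \<times> nat) set" where
  "bsupp p = {(i, j). bcoeff p i j \<noteq> 0}"

definition Nmon :: "bipoly \<Rightarrow> nat" where
  "Nmon q = card (bsupp q)"

definition beval :: "bipoly \<Rightarrow> 'a::real_algebra_1 \<Rightarrow> 'a \<Rightarrow> 'a" where
  "beval p x y = (\<Sum>i\<le>degree p. \<Sum>j\<le>degree (coeff p i).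
                   of_real (bcoeff p i j) * x ^ i * y ^ j)"

text \<open>Total degree (0 for the zero polynomial).\<close>
definition tdeg :: "bipoly \<Rightarrow> nat" where
  "tdeg p = Max (insert 0 ((\<lambda>(i, j). i + j) ` bsupp p))"

definition homog :: "nat \<Rightarrow> bipoly \<Rightarrow> bool" where
  "homog d p \<longleftrightarrow> (\<forall>i j. bcoeff p i j \<noteq> 0 \<longrightarrow> i + j = d)"

definition nonneg_coeffs :: "bipoly \<Rightarrow> bool" where
  "nonneg_coeffs p \<longleftrightarrow> (\<forall>i j. bcoeff p i j \<ge> 0)"

definition varX :: bipoly where "varX = [:0, 1:]"
definition varY :: bipoly where "varY = [:[:0, 1:]:]"

end

theory Submission
  imports Defs
begin

(*
  Invariance under (x, y) -> (eta x, eta y) kills every monomial whose degree is not a multiple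
  of m, so G = G_1 + ... + G_K with G_k the homogeneous part of degree k m.  With F = (x + y)^m,
  the polynomial Sum_k F^(K-k) G_k - F^K is homogeneous of degree K m and vanishes on the line
  x + y = 1, hence everywhere.  The H_jm are the defects F^j - Sum_(k<=j) F^(j-k) G_k: they satisfy
  F H_jm = G_(j+1) + H_(j+1)m with H_0 = 1 and H_Km = 0, which telescopes to the expansion.
  If all H_jm have non-negative coefficients nothing cancels, and multiplying a nonzero such H by
  (x + y)^m creates at least m new monomials, so N(H_jm) + m <= N(G_(j+1)) + N(H_(j+1)m); summing
  over j gives N(G) >= Sum_k N(G_k) >= K m + 1.
*)

section \<open>Coefficients, support and total degree\<close>

lemma bpoly_eqI: "(\<And>i j. bcoeff p i j = bcoeff q i j) \<Longrightarrow> p = q"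
  by (simp add: bcoeff_def poly_eq_iff)

lemma bcoeff_0 [simp]: "bcoeff 0 i j = 0"
  by (simp add: bcoeff_def)

lemma bcoeff_add [simp]: "bcoeff (p + q) i j = bcoeff p i j + bcoeff q i j"
  by (simp add: bcoeff_def)

lemma bcoeff_diff [simp]: "bcoeff (p - q) i j = bcoeff p i j - bcoeff q i j"
  by (simp add: bcoeff_def)

lemma bcoeff_1: "bcoeff 1 i j = (if i = 0 \<and> j = 0 then 1 else 0)"
  by (cases i; cases j) (simp_all add: bcoeff_def one_pCons coeff_pCons)

lemma bcoeff_sum: "bcoeff (\<Sum>x\<in>A. p x) i j = (\<Sum>x\<in>A. bcoeff (p x) i j)"
  by (simp add: bcoeff_def coeff_sum)

lemma bcoeff_mult:
  "bcoeff (p * q) i j = (\<Sum>a\<le>i. \<Sum>b\<le>j. bcoeff p a b * bcoeff q (i - a) (j - b))"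
  by (simp add: bcoeff_def coeff_mult coeff_sum)

lemma bcoeff_varX_mult: "bcoeff (varX * p) i j = (if i = 0 then 0 else bcoeff p (i - 1) j)"
  by (cases i) (simp_all add: bcoeff_def varX_def)

lemma bcoeff_varY_mult: "bcoeff (varY * p) i j = (if j = 0 then 0 else bcoeff p i (j - 1))"
  by (cases j) (simp_all add: bcoeff_def varY_def coeff_pCons)

lemma bcoeff_binomial_power:
  "bcoeff ((varX + varY) ^ m) i j = (if i + j = m then real (m choose i) else 0)"
proof (induction m arbitrary: i j)
  case 0
  then show ?case by (simp add: bcoeff_1)
next
  case (Suc m)
  have "bcoeff ((varX + varY) ^ Suc m) i j
      = bcoeff (varX * (varX + varY) ^ m) i j + bcoeff (varY * (varX + varY) ^ m) i j"
    by (simp add: distrib_right)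
  also have "\<dots> = (if i + j = Suc m then real (Suc m choose i) else 0)"
    unfolding bcoeff_varX_mult bcoeff_varY_mult Suc.IH by (cases i; cases j) auto
  finally show ?case .
qed

lemma finite_bsupp: "finite (bsupp p)"
proof (rule finite_subset)
  show "bsupp p \<subseteq> {..degree p} \<times> {..Max ((\<lambda>i. degree (coeff p i)) ` {..degree p})}"
  proof (clarsimp simp: bsupp_def bcoeff_def)
    fix i j assume ij: "coeff (coeff p i) j \<noteq> 0"
    then have i: "i \<le> degree p"
      by (metis coeff_0 le_degree)
    have "j \<le> degree (coeff p i)"
      using ij by (rule le_degree)
    also have "\<dots> \<le> Max ((\<lambda>i. degree (coeff p i)) ` {..degree p})"
      using i by (intro Max_ge) auto
    finally show "i \<le> degree p \<and> j \<le> Max ((\<lambda>i. degree (coeff p i)) ` {..degree p})"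
      using i by simp
  qed
qed simp

lemma bsupp_1: "bsupp 1 = {(0, 0)}"
  by (auto simp: bsupp_def bcoeff_1)

lemma Nmon_0 [simp]: "Nmon 0 = 0"
  by (simp add: Nmon_def bsupp_def)

lemma Nmon_1 [simp]: "Nmon 1 = 1"
  by (simp add: Nmon_def bsupp_1)

lemma Nmon_add_le: "Nmon (p + q) \<le> Nmon p + Nmon q"
proof -
  have "Nmon (p + q) \<le> card (bsupp p \<union> bsupp q)"
    unfolding Nmon_def by (rule card_mono) (auto simp: finite_bsupp, auto simp: bsupp_def)
  also have "\<dots> \<le> Nmon p + Nmon q"
    unfolding Nmon_def by (rule card_Un_le)
  finally show ?thesis .
qed

lemma tdeg_0 [simp]: "tdeg 0 = 0"
  by (simp add: tdeg_def bsupp_def)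

lemma tdeg_ge: "bcoeff p i j \<noteq> 0 \<Longrightarrow> i + j \<le> tdeg p"
  unfolding tdeg_def using finite_bsupp by (intro Max_ge) (auto simp: bsupp_def)

lemma tdeg_attained:
  assumes "p \<noteq> 0"
  obtains i j where "bcoeff p i j \<noteq> 0" "i + j = tdeg p"
proof -
  have "bsupp p \<noteq> {}"
    using assms bpoly_eqI[of p 0] by (auto simp: bsupp_def)
  then have "tdeg p = Max ((\<lambda>(i, j). i + j) ` bsupp p)"
    unfolding tdeg_def using finite_bsupp by (subst Max_insert) (auto intro: max_absorb2)
  also have "\<dots> \<in> (\<lambda>(i, j). i + j) ` bsupp p"
    using \<open>bsupp p \<noteq> {}\<close> finite_bsupp by (intro Max_in) auto
  finally show ?thesis
    using that by (auto simp: bsupp_def)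
qed

lemma degree_le_tdeg: "degree p \<le> tdeg p"
proof (cases "p = 0")
  case False
  then have "bcoeff p (degree p) (degree (lead_coeff p)) \<noteq> 0"
    by (simp add: bcoeff_def)
  then show ?thesis
    using tdeg_ge by fastforce
qed simp

lemma degree_coeff_le_tdeg: "degree (coeff p i) \<le> tdeg p"
proof (cases "coeff p i = 0")
  case False
  then have "bcoeff p i (degree (coeff p i)) \<noteq> 0"
    by (simp add: bcoeff_def)
  then show ?thesis
    using tdeg_ge by fastforce
qed simp

section \<open>Homogeneous parts\<close>

lemma homog_0 [simp]: "homog d 0"
  by (simp add: homog_def)

lemma homog_1: "homog 0 1"
  by (simp add: homog_def bcoeff_1)

lemma homog_add: "homog d p \<Longrightarrow> homog d q \<Longrightarrow> homog d (p + q)"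
  unfolding homog_def by (metis add_0 bcoeff_add)

lemma homog_diff: "homog d p \<Longrightarrow> homog d q \<Longrightarrow> homog d (p - q)"
  unfolding homog_def by (metis diff_self bcoeff_diff)

lemma homog_sum: "(\<And>x. x \<in> A \<Longrightarrow> homog d (p x)) \<Longrightarrow> homog d (\<Sum>x\<in>A. p x)"
  by (induction A rule: infinite_finite_induct) (auto intro: homog_add)

lemma homog_mult:
  assumes "homog d p" "homog e q"
  shows "homog (d + e) (p * q)"
  unfolding homog_def
proof (intro allI impI)
  fix i j
  assume "bcoeff (p * q) i j \<noteq> 0"
  then obtain a b where ab: "a \<le> i" "b \<le> j" "bcoeff p a b * bcoeff q (i - a) (j - b) \<noteq> 0"
    unfolding bcoeff_mult by (meson atMost_iff sum.neutral)
  then have "a + b = d" "(i - a) + (j - b) = e"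
    using assms unfolding homog_def by auto
  then show "i + j = d + e"
    using ab by linarith
qed

lemma homog_power: "homog d p \<Longrightarrow> homog (n * d) (p ^ n)"
  by (induction n) (auto simp: homog_1 dest: homog_mult)

lemma homog_binomial_power: "homog m ((varX + varY) ^ m)"
  by (simp add: homog_def bcoeff_binomial_power)

definition homog_part :: "nat \<Rightarrow> bipoly \<Rightarrow> bipoly" where
  "homog_part d p = (\<Sum>i\<le>d. monom (monom (bcoeff p i (d - i)) (d - i)) i)"

lemma bcoeff_homog_part: "bcoeff (homog_part d p) i j = (if i + j = d then bcoeff p i j else 0)"
proof -
  have "bcoeff (homog_part d p) i j
      = (\<Sum>k\<le>d. if k = i then coeff (monom (bcoeff p k (d - k)) (d - k)) j else 0)"
    unfolding homog_part_def bcoeff_sum by (intro sum.cong) (auto simp: bcoeff_def coeff_monom)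
  also have "\<dots> = (if i + j = d then bcoeff p i j else 0)"
    by (auto simp: coeff_monom)
  finally show ?thesis .
qed

lemma homog_homog_part: "homog d (homog_part d p)"
  by (simp add: homog_def bcoeff_homog_part)

lemma nonneg_coeffs_homog_part: "nonneg_coeffs p \<Longrightarrow> nonneg_coeffs (homog_part d p)"
  by (simp add: nonneg_coeffs_def bcoeff_homog_part)

lemma homog_part_tdeg_nonzero: "p \<noteq> 0 \<Longrightarrow> homog_part (tdeg p) p \<noteq> 0"
  by (metis tdeg_attained bcoeff_0 bcoeff_homog_part)

lemma sum_homog_parts:
  assumes "finite A" "inj_on f A"
    and "\<And>i j. bcoeff p i j \<noteq> 0 \<Longrightarrow> i + j \<in> f ` A"
  shows "(\<Sum>k\<in>A. homog_part (f k) p) = p"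
proof (rule bpoly_eqI)
  fix i j
  show "bcoeff (\<Sum>k\<in>A. homog_part (f k) p) i j = bcoeff p i j"
  proof (cases "bcoeff p i j = 0")
    case False
    then obtain k where k: "k \<in> A" "f k = i + j"
      using assms(3) by force
    have "(\<Sum>l\<in>A. if i + j = f l then bcoeff p i j else 0)
        = (\<Sum>l\<in>A. if l = k then bcoeff p i j else 0)"
      using k assms(2) by (intro sum.cong) (auto dest: inj_onD)
    then show ?thesis
      using k assms(1) by (simp add: bcoeff_sum bcoeff_homog_part)
  qed (simp add: bcoeff_sum bcoeff_homog_part sum.neutral)
qed

lemma sum_Nmon_homog_parts_le:
  assumes "finite A" "inj_on f A"
  shows "(\<Sum>k\<in>A. Nmon (homog_part (f k) p)) \<le> Nmon p"
proof -
  have supp: "bsupp (homog_part d p) = {(i, j) \<in> bsupp p. i + j = d}" for d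
    by (auto simp: bsupp_def bcoeff_homog_part split: if_splits)
  have "(\<Sum>k\<in>A. Nmon (homog_part (f k) p)) = card (\<Union>k\<in>A. bsupp (homog_part (f k) p))"
    unfolding Nmon_def using assms
    by (intro card_UN_disjoint[symmetric]) (auto simp: finite_bsupp supp[symmetric], auto simp: supp dest: inj_onD)
  also have "\<dots> \<le> Nmon p"
    unfolding Nmon_def by (intro card_mono finite_bsupp) (auto simp: supp)
  finally show ?thesis .
qed

section \<open>Evaluation\<close>

lemma poly_eq_sum_atMost:
  fixes p :: "'a::comm_semiring_1 poly"
  assumes "degree p \<le> n"
  shows "poly p x = (\<Sum>i\<le>n. coeff p i * x ^ i)"
  using assms
  by (subst poly_as_sum_of_monoms'[of p n, symmetric]) (simp_all add: poly_sum poly_monom)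

lemma beval_eq_box_sum:
  "beval p x y = (\<Sum>i\<le>tdeg p. \<Sum>j\<le>tdeg p. of_real (bcoeff p i j) * x ^ i * y ^ j)"
proof -
  have inner: "(\<Sum>j\<le>degree (coeff p i). of_real (bcoeff p i j) * x ^ i * y ^ j)
             = (\<Sum>j\<le>tdeg p. of_real (bcoeff p i j) * x ^ i * (y::'a) ^ j)" for i
    using degree_coeff_le_tdeg
    by (intro sum.mono_neutral_left) (auto simp: bcoeff_def coeff_eq_0)
  show ?thesis
    unfolding beval_def inner using degree_le_tdeg
    by (intro sum.mono_neutral_left) (auto simp: bcoeff_def coeff_eq_0)
qed

lemma beval_homog:
  fixes x y s :: "'a::{real_algebra_1, comm_ring_1}"
  assumes "homog d p"
  shows "beval p (s * x) (s * y) = s ^ d * beval p x y"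
proof -
  have "of_real (bcoeff p i j) * (s * x) ^ i * (s * y) ^ j
      = s ^ d * (of_real (bcoeff p i j) * x ^ i * y ^ j)" for i j
  proof (cases "bcoeff p i j = 0")
    case False
    then have "d = i + j"
      using assms by (simp add: homog_def)
    then show ?thesis
      by (simp add: power_mult_distrib power_add mult_ac)
  qed simp
  then show ?thesis
    by (simp add: beval_eq_box_sum sum_distrib_left)
qed

definition eval_y :: "real \<Rightarrow> bipoly \<Rightarrow> real poly" where
  "eval_y y p = map_poly (\<lambda>c. poly c y) p"

lemma coeff_eval_y [simp]: "coeff (eval_y y p) i = poly (coeff p i) y"
  by (simp add: eval_y_def coeff_map_poly)

lemma eval_y_diff: "eval_y y (p - q) = eval_y y p - eval_y y q"
  by (simp add: poly_eq_iff)

lemma eval_y_mult: "eval_y y (p * q) = eval_y y p * eval_y y q"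
  by (simp add: poly_eq_iff coeff_mult poly_sum)

lemma eval_y_1: "eval_y y 1 = 1"
  by (simp add: poly_eq_iff coeff_1)

lemma eval_y_power: "eval_y y (p ^ n) = eval_y y p ^ n"
  by (induction n) (simp_all add: eval_y_1 eval_y_mult)

lemma eval_y_sum: "eval_y y (\<Sum>x\<in>A. p x) = (\<Sum>x\<in>A. eval_y y (p x))"
  by (simp add: poly_eq_iff coeff_sum poly_sum)

lemma eval_y_varX_plus_varY: "eval_y y (varX + varY) = [:y, 1:]"
  by (simp add: poly_eq_iff varX_def varY_def coeff_pCons split: nat.split)

lemma beval_real: "beval p x y = poly (eval_y y p) (x::real)"
proof -
  have "beval p x y = (\<Sum>i\<le>degree p. poly (coeff p i) y * x ^ i)"
    by (simp add: beval_def poly_altdef bcoeff_def sum_distrib_left sum_distrib_right mult_ac)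
  also have "\<dots> = poly (eval_y y p) x"
    by (simp add: poly_eq_sum_atMost[of _ "degree p"] eval_y_def map_poly_degree_leq coeff_map_poly)
  finally show ?thesis .
qed

lemma beval_diff: "beval (p - q) (x::real) y = beval p x y - beval q x y"
  by (simp add: beval_real eval_y_diff)

lemma beval_mult: "beval (p * q) (x::real) y = beval p x y * beval q x y"
  by (simp add: beval_real eval_y_mult)

lemma beval_power: "beval (p ^ n) (x::real) y = beval p x y ^ n"
  by (simp add: beval_real eval_y_power)

lemma beval_sum: "beval (\<Sum>k\<in>A. p k) (x::real) y = (\<Sum>k\<in>A. beval (p k) x y)"
  by (simp add: beval_real eval_y_sum poly_sum)

lemma beval_binomial_power: "beval ((varX + varY) ^ m) (x::real) y = (x + y) ^ m"
  by (simp add: beval_real eval_y_power eval_y_varX_plus_varY add.commute)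

lemma beval_zero_zero: "beval p (0::real) 0 = bcoeff p 0 0"
  by (simp add: beval_real poly_0_coeff_0 bcoeff_def)

lemma double_sum_eq_0_imp_coeff_eq_0:
  fixes c :: "nat \<Rightarrow> nat \<Rightarrow> 'a::{idom, ring_char_0}"
  assumes "\<And>x y. (\<Sum>i\<le>n. \<Sum>j\<le>n. c i j * x ^ i * y ^ j) = 0" "i \<le> n" "j \<le> n"
  shows "c i j = 0"
proof -
  have "(\<Sum>j\<le>n. c i j * y ^ j) = 0" for y
  proof -
    have "poly (\<Sum>i\<le>n. monom (\<Sum>j\<le>n. c i j * y ^ j) i) x = 0" for x
      using assms(1)[of x y]
      by (simp add: poly_sum poly_monom sum_distrib_left sum_distrib_right mult_ac)
    then have "(\<Sum>i\<le>n. monom (\<Sum>j\<le>n. c i j * y ^ j) i) = 0"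
      using poly_all_0_iff_0 by blast
    from arg_cong[OF this, of "\<lambda>q. coeff q i"] show ?thesis
      using assms(2) by (simp add: coeff_sum coeff_monom)
  qed
  then have "poly (\<Sum>j\<le>n. monom (c i j) j) y = 0" for y
    by (simp add: poly_sum poly_monom)
  then have "(\<Sum>j\<le>n. monom (c i j) j) = 0"
    using poly_all_0_iff_0 by blast
  from arg_cong[OF this, of "\<lambda>q. coeff q j"] show ?thesis
    using assms(3) by (simp add: coeff_sum coeff_monom)
qed

(* By homogeneity q vanishes off the line x + y = 0, so every q(-, y) has infinitely many roots. *)
lemma homog_vanishing_on_line_eq_0:
  assumes "homog d q" and "\<And>x y::real. x + y = 1 \<Longrightarrow> beval q x y = 0"
  shows "q = 0"
proof -
  have off_line: "poly (eval_y y q) x = 0" if "x \<noteq> - y" for x y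
  proof -
    have "beval q x y = (x + y) ^ d * beval q (x / (x + y)) (y / (x + y))"
      using beval_homog[OF assms(1), of "x + y" "x / (x + y)" "y / (x + y)"] that by simp
    also have "beval q (x / (x + y)) (y / (x + y)) = 0"
      using that by (intro assms(2)) (simp add: add_divide_distrib[symmetric])
    finally show ?thesis
      by (simp add: beval_real)
  qed
  have "eval_y y q = 0" for y
  proof (rule ccontr)
    assume "eval_y y q \<noteq> 0"
    then have "finite {x. poly (eval_y y q) x = 0}"
      by (rule poly_roots_finite)
    moreover have "UNIV - {- y} \<subseteq> {x. poly (eval_y y q) x = 0}"
      using off_line by auto
    ultimately show False
      using infinite_UNIV_char_0 by (metis finite_Diff2 finite.emptyI finite.insertI finite_subset)
  qed
  then have "poly (coeff q i) y = 0" for i y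
    by (metis coeff_eval_y coeff_0)
  then have "coeff q i = 0" for i
    using poly_all_0_iff_0 by blast
  then show "q = 0"
    by (simp add: poly_eq_iff)
qed

section \<open>Invariance under a primitive root of unity\<close>

lemma primitive_root_power_eq_1_imp_dvd:
  fixes \<eta> :: "'a::monoid_mult"
  assumes "\<eta> ^ m = 1" "\<forall>k. 0 < k \<and> k < m \<longrightarrow> \<eta> ^ k \<noteq> 1" "m > 0" "\<eta> ^ n = 1"
  shows "m dvd n"
proof -
  have "\<eta> ^ n = \<eta> ^ (m * (n div m) + n mod m)"
    by simp
  also have "\<dots> = (\<eta> ^ m) ^ (n div m) * \<eta> ^ (n mod m)"
    by (simp only: power_add power_mult)
  finally have "\<eta> ^ (n mod m) = 1"
    using assms(1,4) by simp
  then show ?thesis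
    using assms(2,3) by (meson mod_less_divisor mod_0_imp_dvd neq0_conv)
qed

lemma rotation_invariant_bcoeff_dvd:
  fixes \<eta> :: complex
  assumes "\<eta> ^ m = 1" "\<forall>k. 0 < k \<and> k < m \<longrightarrow> \<eta> ^ k \<noteq> 1" "m > 0"
    and "\<forall>x y :: complex. beval p (\<eta> * x) (\<eta> * y) = beval p x y"
    and "bcoeff p i j \<noteq> 0"
  shows "m dvd i + j"
proof -
  define c where "c i j = (\<eta> ^ (i + j) - 1) * of_real (bcoeff p i j)" for i j
  have "c i j * x ^ i * y ^ j = of_real (bcoeff p i j) * (\<eta> * x) ^ i * (\<eta> * y) ^ j
          - of_real (bcoeff p i j) * x ^ i * y ^ j" for i j x y
    by (simp add: c_def power_mult_distrib power_add algebra_simps)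
  then have box: "(\<Sum>i\<le>tdeg p. \<Sum>j\<le>tdeg p. c i j * x ^ i * y ^ j)
      = beval p (\<eta> * x) (\<eta> * y) - beval p x y" for x y
    by (simp add: beval_eq_box_sum[of p] sum_subtractf)
  have "c i j = 0"
  proof (rule double_sum_eq_0_imp_coeff_eq_0)
    show "(\<Sum>i\<le>tdeg p. \<Sum>j\<le>tdeg p. c i j * x ^ i * y ^ j) = 0" for x y
      using assms(4) by (simp only: box diff_self)
  qed (use tdeg_ge[OF assms(5)] in auto)
  then have "\<eta> ^ (i + j) = 1"
    using assms(5) by (simp add: c_def)
  then show ?thesis
    by (rule primitive_root_power_eq_1_imp_dvd[OF assms(1-3)])
qed

lemma sum_homog_parts_rotation_invariant:
  fixes \<eta> :: complex
  assumes "\<eta> ^ m = 1" "\<forall>k. 0 < k \<and> k < m \<longrightarrow> \<eta> ^ k \<noteq> 1" "m > 0"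
    and "\<forall>x y :: complex. beval p (\<eta> * x) (\<eta> * y) = beval p x y"
    and "bcoeff p 0 0 = 0" "tdeg p = K * m"
  shows "(\<Sum>k\<in>{1..K}. homog_part (k * m) p) = p"
proof (rule sum_homog_parts)
  show "inj_on (\<lambda>k. k * m) {1..K}"
    using assms(3) by (auto simp: inj_on_def)
  show "i + j \<in> (\<lambda>k. k * m) ` {1..K}" if nz: "bcoeff p i j \<noteq> 0" for i j
  proof -
    obtain k where k: "i + j = k * m"
      using rotation_invariant_bcoeff_dvd[OF assms(1-4) nz] by (metis dvdE mult.commute)
    have "i + j \<noteq> 0"
      using nz assms(5) by (metis add_is_0)
    moreover have "i + j \<le> K * m"
      using tdeg_ge[OF nz] assms(6) by simp
    ultimately show ?thesis
      using k assms(3) by auto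
  qed
qed simp

section \<open>The defect sequence\<close>

(* F^j (1 - Sum_(i<=j) g i / F^i); for F = (x + y)^m and g k = G_km these are the H_jm. *)
definition defect :: "'a::comm_ring_1 \<Rightarrow> (nat \<Rightarrow> 'a) \<Rightarrow> nat \<Rightarrow> 'a" where
  "defect F g j = F ^ j - (\<Sum>i\<in>{1..j}. F ^ (j - i) * g i)"

lemma defect_0 [simp]: "defect F g 0 = 1"
  by (simp add: defect_def)

lemma defect_Suc: "F * defect F g j = g (Suc j) + defect F g (Suc j)"
proof -
  have "F * (\<Sum>i\<in>{1..j}. F ^ (j - i) * g i) = (\<Sum>i\<in>{1..j}. F ^ (Suc j - i) * g i)"
    unfolding sum_distrib_left by (intro sum.cong refl) (simp add: Suc_diff_le mult.assoc)
  then show ?thesis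
    by (simp add: defect_def right_diff_distrib)
qed

lemma homog_defect:
  assumes "homog m F" "\<And>k. k \<in> {1..j} \<Longrightarrow> homog (k * m) (g k)"
  shows "homog (j * m) (defect F g j)"
  unfolding defect_def
proof (intro homog_diff homog_sum homog_power[OF assms(1)])
  fix k
  assume k: "k \<in> {1..j}"
  then have "(j - k) * m + k * m = j * m"
    by (simp add: add_mult_distrib[symmetric])
  then show "homog (j * m) (F ^ (j - k) * g k)"
    using homog_mult[OF homog_power[OF assms(1)] assms(2)[OF k]] by metis
qed

lemma defect_eq_0:
  assumes "homog m F" "\<And>x y::real. x + y = 1 \<Longrightarrow> beval F x y = 1"
    and "\<And>k. k \<in> {1..K} \<Longrightarrow> homog (k * m) (g k)"
    and "\<And>x y::real. x + y = 1 \<Longrightarrow> (\<Sum>k\<in>{1..K}. beval (g k) x y) = 1"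
  shows "defect F g K = 0"
proof (rule homog_vanishing_on_line_eq_0)
  show "homog (K * m) (defect F g K)"
    using assms(1,3) by (rule homog_defect)
  show "beval (defect F g K) x y = 0" if "x + y = 1" for x y :: real
    using that assms(2,4) by (simp add: defect_def beval_diff beval_sum beval_mult beval_power)
qed

lemma sum_defect_expansion:
  assumes "defect F g K = 0"
  shows "(\<Sum>j<K. F * (if j = 0 then 1 else defect F g j) - (if j + 1 = K then 0 else defect F g (j + 1)))
       = (\<Sum>k\<in>{1..K}. g k)"
proof -
  have "F * (if j = 0 then 1 else defect F g j) - (if j + 1 = K then 0 else defect F g (j + 1))
      = g (Suc j)" for j
    using defect_Suc[of F g j] assms by (cases "j = 0"; cases "j + 1 = K") (simp_all add: diff_eq_eq)
  then show ?thesis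
    by (simp add: sum.atLeast1_atMost_eq)
qed

section \<open>Counting monomials\<close>

lemma nonneg_coeffs_0: "nonneg_coeffs 0"
  by (simp add: nonneg_coeffs_def)

lemma nonneg_coeffs_1: "nonneg_coeffs 1"
  by (simp add: nonneg_coeffs_def bcoeff_1)

lemma nonneg_coeffs_add_eq_0_iff:
  assumes "nonneg_coeffs p" "nonneg_coeffs q"
  shows "p + q = 0 \<longleftrightarrow> p = 0 \<and> q = 0"
proof
  assume sum: "p + q = 0"
  have "bcoeff p i j = 0 \<and> bcoeff q i j = 0" for i j
    using assms arg_cong[OF sum, of "\<lambda>r. bcoeff r i j"]
    by (simp add: nonneg_coeffs_def add_nonneg_eq_0_iff)
  then show "p = 0 \<and> q = 0"
    by (auto intro: bpoly_eqI)
qed simp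

lemma bcoeff_mult_ge:
  assumes "nonneg_coeffs p" "nonneg_coeffs q"
  shows "bcoeff p a b * bcoeff q i j \<le> bcoeff (p * q) (a + i) (b + j)"
proof -
  have nonneg: "0 \<le> bcoeff p a' b' * bcoeff q i' j'" for a' b' i' j'
    using assms by (simp add: nonneg_coeffs_def)
  have "bcoeff p a b * bcoeff q i j \<le> (\<Sum>b'\<le>b + j. bcoeff p a b' * bcoeff q (a + i - a) (b + j - b'))"
    using member_le_sum[of b "{..b + j}" "\<lambda>b'. bcoeff p a b' * bcoeff q (a + i - a) (b + j - b')"]
      nonneg by simp
  also have "\<dots> \<le> (\<Sum>a'\<le>a + i. \<Sum>b'\<le>b + j. bcoeff p a' b' * bcoeff q (a + i - a') (b + j - b'))"
    by (rule member_le_sum) (auto intro: sum_nonneg nonneg)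
  finally show ?thesis
    by (simp add: bcoeff_mult)
qed

(* The product contains y^m times every monomial of h, and x^t y^(m-t) (1 <= t <= m) times a
   monomial of h of largest x-degree; non-negativity rules out cancellation. *)
lemma Nmon_binomial_power_mult:
  assumes nonneg: "nonneg_coeffs h" and "h \<noteq> 0"
  shows "Nmon h + m \<le> Nmon ((varX + varY) ^ m * h)"
proof -
  define P where "P = (varX + varY) ^ m * h"
  have ge: "bcoeff ((varX + varY) ^ m) s t * bcoeff h i j \<le> bcoeff P (s + i) (t + j)" for s t i j
    unfolding P_def
    by (rule bcoeff_mult_ge[OF _ nonneg]) (simp add: nonneg_coeffs_def bcoeff_binomial_power)
  have pos: "bcoeff h i j > 0" if "(i, j) \<in> bsupp h" for i j
    using that nonneg by (simp add: bsupp_def nonneg_coeffs_def order_less_le)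
  obtain a b where ab: "(a, b) \<in> bsupp h" and a_max: "\<And>i j. (i, j) \<in> bsupp h \<Longrightarrow> i \<le> a"
  proof -
    have "bsupp h \<noteq> {}"
      using assms(2) bpoly_eqI[of h 0] by (auto simp: bsupp_def)
    then have "Max (fst ` bsupp h) \<in> fst ` bsupp h"
      using finite_bsupp by (intro Max_in) auto
    then show ?thesis
      using that finite_bsupp by (force intro: Max_ge)
  qed
  define S where "S = (\<lambda>(i, j). (i, j + m)) ` bsupp h"
  define T where "T = (\<lambda>t. (a + t, b + m - t)) ` {1..m}"
  have "S \<subseteq> bsupp P"
  proof
    fix x assume "x \<in> S"
    then obtain i j where x: "x = (i, j + m)" "(i, j) \<in> bsupp h"
      unfolding S_def by auto
    have "0 < bcoeff ((varX + varY) ^ m) 0 m * bcoeff h i j"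
      using pos[OF x(2)] by (simp add: bcoeff_binomial_power)
    also have "\<dots> \<le> bcoeff P i (j + m)"
      using ge[of 0 m i j] by (simp add: add.commute)
    finally show "x \<in> bsupp P"
      using x by (simp add: bsupp_def)
  qed
  moreover have "T \<subseteq> bsupp P"
  proof
    fix x assume "x \<in> T"
    then obtain t where x: "x = (a + t, b + m - t)" "1 \<le> t" "t \<le> m"
      unfolding T_def by auto
    have "0 < bcoeff ((varX + varY) ^ m) t (m - t) * bcoeff h a b"
      using pos[OF ab] x by (simp add: bcoeff_binomial_power)
    also have "\<dots> \<le> bcoeff P (a + t) (b + m - t)"
      using ge[of t "m - t" a b] x by (simp add: add.commute)
    finally show "x \<in> bsupp P"
      using x by (simp add: bsupp_def)
  qed
  moreover have "S \<inter> T = {}"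
    unfolding S_def T_def using a_max by fastforce
  moreover have "card S = Nmon h"
    unfolding S_def Nmon_def by (rule card_image) (auto simp: inj_on_def)
  moreover have "card T = m"
    unfolding T_def by (subst card_image) (auto simp: inj_on_def)
  ultimately have "Nmon h + m = card (S \<union> T)" "S \<union> T \<subseteq> bsupp P"
    by (simp_all add: card_Un_disjoint S_def T_def finite_bsupp)
  then show ?thesis
    unfolding P_def Nmon_def by (metis card_mono finite_bsupp)
qed

lemma telescoping_le:
  fixes a h :: "nat \<Rightarrow> nat"
  assumes "\<And>j. j < K \<Longrightarrow> h j + m \<le> a j + h (Suc j)"
  shows "h 0 + K * m \<le> (\<Sum>j<K. a j) + h K"
  using assms
proof (induction K)
  case (Suc K)
  have "h 0 + K * m \<le> (\<Sum>j<K. a j) + h K"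
    using Suc by simp
  moreover have "h K + m \<le> a K + h (Suc K)"
    using Suc.prems by simp
  ultimately show ?case
    by simp
qed simp


lemma Nmon_defect_lower_bound:
  fixes g :: "nat \<Rightarrow> bipoly" and m :: nat
  defines "F \<equiv> (varX + varY) ^ m"
  assumes "defect F g K = 0" "g K \<noteq> 0"
    and nonneg_defect: "\<forall>j\<in>{1..K-1}. nonneg_coeffs (defect F g j)"
    and nonneg_g: "\<And>j. j \<in> {1..K} \<Longrightarrow> nonneg_coeffs (g j)"
  shows "K * m + 1 \<le> (\<Sum>j\<in>{1..K}. Nmon (g j))"
proof -
  let ?h = "defect F g"
  have nonneg_h: "nonneg_coeffs (?h j)" if "j \<le> K" for j
    using that nonneg_defect assms(2)
    by (cases "j = 0 \<or> j = K") (auto simp: nonneg_coeffs_0 nonneg_coeffs_1)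
  have "j < K \<longrightarrow> ?h j \<noteq> 0" if "j \<le> K" for j
    using that
  proof (induction j rule: inc_induct)
    case (step n)
    have "g (Suc n) + ?h (Suc n) \<noteq> 0"
    proof (cases "Suc n = K")
      case True
      then show ?thesis
        using assms(2,3) by simp
    next
      case False
      then have "?h (Suc n) \<noteq> 0"
        using step by simp
      then show ?thesis
        using nonneg_coeffs_add_eq_0_iff[OF nonneg_g nonneg_h] step.hyps by simp
    qed
    then show ?case
      by (metis defect_Suc mult_zero_right)
  qed simp
  then have "Nmon (?h j) + m \<le> Nmon (g (Suc j)) + Nmon (?h (Suc j))" if "j < K" for j
    using that Nmon_binomial_power_mult[OF nonneg_h, of j m] defect_Suc[of F g j] Nmon_add_le
    unfolding F_def by (metis less_imp_le_nat order_trans)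
  then have "Nmon (?h 0) + K * m \<le> (\<Sum>j<K. Nmon (g (Suc j))) + Nmon (?h K)"
    by (rule telescoping_le)
  then show ?thesis
    using assms(2) by (simp add: sum.atLeast1_atMost_eq)
qed

theorem theorem4p1:
  fixes m K :: nat and \<eta> :: complex and G :: bipoly
  assumes "m \<ge> 2"
    and "\<eta> ^ m = 1" and "\<forall>k. 0 < k \<and> k < m \<longrightarrow> \<eta> ^ k \<noteq> 1"
    and "\<forall>x y :: complex. beval G (\<eta> * x) (\<eta> * y) = beval G x y"
    and "\<forall>x y :: real. x + y = 1 \<longrightarrow> beval G x y = 1"
    and "nonneg_coeffs G"
    and "beval G (0::real) 0 = 0"
    and "K > 0" and "tdeg G = K * m"
  shows "\<exists>H :: nat \<Rightarrow> bipoly.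
           (\<forall>j\<in>{1..K-1}. homog (j * m) (H j)) \<and>
           G = (\<Sum>j<K. (varX + varY) ^ m * (if j = 0 then 1 else H j)
                        - (if j + 1 = K then 0 else H (j + 1))) \<and>
           ((\<forall>j\<in>{1..K-1}. nonneg_coeffs (H j)) \<longrightarrow> Nmon G \<ge> K * m + 1)"
proof -
  define F where "F = (varX + varY) ^ m"
  define g where "g k = homog_part (k * m) G" for k
  have "m > 0"
    using assms(1) by simp
  have G_sum: "(\<Sum>k\<in>{1..K}. g k) = G"
    unfolding g_def using assms(2-4,7,9) \<open>m > 0\<close>
    by (intro sum_homog_parts_rotation_invariant) (auto simp: beval_zero_zero)
  have homog_F: "homog m F" and homog_g: "\<And>k. homog (k * m) (g k)"
    by (simp_all add: F_def g_def homog_binomial_power homog_homog_part)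
  have defect_K: "defect F g K = 0"
  proof (rule defect_eq_0[OF homog_F _ homog_g])
    show "beval F x y = 1" if "x + y = 1" for x y :: real
      using that by (simp add: F_def beval_binomial_power)
    show "(\<Sum>k\<in>{1..K}. beval (g k) x y) = 1" if "x + y = 1" for x y :: real
      using assms(5) that G_sum beval_sum by metis
  qed
  have "G \<noteq> 0"
    using assms(8,9) \<open>m > 0\<close> by (metis tdeg_0 mult_pos_pos less_irrefl)
  then have "g K \<noteq> 0"
    using homog_part_tdeg_nonzero[of G] assms(9) by (simp add: g_def)
  have "K * m + 1 \<le> Nmon G" if "\<forall>j\<in>{1..K-1}. nonneg_coeffs (defect F g j)"
  proof -
    have "K * m + 1 \<le> (\<Sum>k\<in>{1..K}. Nmon (g k))"
      using defect_K \<open>g K \<noteq> 0\<close> that unfolding F_def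
    proof (rule Nmon_defect_lower_bound)
      show "nonneg_coeffs (g j)" for j
        using assms(6) by (simp add: g_def nonneg_coeffs_homog_part)
    qed
    also have "\<dots> \<le> Nmon G"
      unfolding g_def using \<open>m > 0\<close> by (intro sum_Nmon_homog_parts_le) (auto simp: inj_on_def)
    finally show ?thesis .
  qed
  then show ?thesis
    using homog_defect[OF homog_F homog_g] sum_defect_expansion[OF defect_K] G_sum
    by (intro exI[of _ "defect F g"]) (auto simp: F_def)
qed

end
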